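(* In the one-counter game $\mathcal{G}$ defined below, for every $j\in\{1,\dots,2^{2^n}\}$, every $d\in\Delta$ and every $i\in\mathbb{N}$ such that the configuration $C^w_i$ exists, $\mathrm{Verifier}$ has a strategy from the configuration $((j,d),i)$ guaranteeing that the play reaches the state $s'_F$ if and only if $C^w_i(j)=d$. In particular, $((1,(q_F,a)),i)$ is winning for $\mathrm{Verifier}$ iff $C^w_i(1)=(q_F,a)$, i.e. iff $\mathcal{T}$ accepts $w$ after $i$ steps.
   Context: Let $\mathcal{T}=(Q,q_0,\Sigma,\delta,q_F)$ be a deterministic Turing machine with tape alphabet $\Sigma=\{0,1,\#,a,r\}$ ($\#$ blank; $\mathcal{T}$ accepts immediately on reading $a$ and rejects immediately on reading $r$), transition function $\delta:Q\times\Sigma\to Q\times\Sigma\times\{\mathrm{Left},\mathrm{Right}\}$ with components $\delta_1,\delta_2,\delta_3$, and accepting state $q_F$. Let $w=w_1\dots w_{|w|}$ be an input, $n=|w|^k$, and assume $\mathcal{T}$ uses only cells $1,\dots,2^{2^n}$, with extra cells $0$ and $2^{2^n}+1$ initially holding $a$, the head initially on cell 1, and that if $\mathcal{T}$ halts accepting it does so in state $q_F$ with the head on cell 1 holding $a$. Let $\Delta=\Sigma\cup(Q\times\Sigma)$. The run of $\mathcal{T}$ on $w$ is the sequence of configurations $C^w_0C^w_1\dots$, each $C^w_i\in\Delta^{2^{2^n}+2}$ (indexed $0,\dots,2^{2^n}+1$) containing exactly one element of $Q\times\Sigma$ marking the state and head position; $C^w_0=a\,(q_0,w_1)\,w_2\dots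 w_{|w|}\,\#\dots\#\,a$; $C^w_i(j)$ is the $j$-th element. For $d\in\Delta$, $\mathrm{Pre}(d)$ is the set of triples: all $(d_1,d_2,d_3)\in\Sigma^3$ with $d_2=d$; all $((q,b),d_2,d_3)\in(Q\times\Sigma)\times\Sigma^2$ with either $d=(\delta_1(q,b),d_2)$ and $\delta_3(q,b)=\mathrm{Right}$, or $d=d_2$ and $\delta_3(q,b)\neq\mathrm{Right}$; all $(d_1,d_2,(q,b))\in\Sigma^2\times(Q\times\Sigma)$ with either $d=(\delta_1(q,b),d_2)$ and $\delta_3(q,b)=\mathrm{Left}$, or $d=d_2$ and $\delta_3(q,b)\neq\mathrm{Left}$; all $(d_1,(q,b),d_3)\in\Sigma\times(Q\times\Sigma)\times\Sigma$ with $d=\delta_2(q,b)$. The OCG $\mathcal{G}$ has players $\mathrm{Verifier},\mathrm{Falsifier}$, states $S'=(\{0,\dots,2^{2^n}+1\}\times(\Delta\cup\Delta^3))\cup\{s'_0,s'_z,s'_r,s'_F\}$, with $\mathrm{Verifier}$ controlling $(\{0,\dots,2^{2^n}+1\}\times\Delta)\cup\{s'_0\}$ and $\mathrm{Falsifier}$ the rest. Its transitions (state, weight, state) are exactly: $(s'_0,1,s'_0)$; $(s'_0,0,(1,(q_F,a)))$; $((j,d),0,(j,(d_1,d_2,d_3)))$ for $j\in\{1,\dots,2^{2^n}\}$, $(d_1,d_2,d_3)\in\mathrm{Pre}(d)$; for $j\in\{0,2^{2^n}+1\}$: $((j,a),0,s'_F)$ and $((j,d),0,s'_r)$ for $d\neq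 a$; $((j,d),0,s'_z)$ for all $(j,d)$ with $C^w_0(j)=d$; $(s'_z,0,s'_F)$; $(s'_z,-1,s'_r)$; and for $j\in\{1,\dots,2^{2^n}\}$ and $d_1,d_2,d_3\in\Delta$: $((j,(d_1,d_2,d_3)),-1,(j-1,d_1))$, $((j,(d_1,d_2,d_3)),-1,(j,d_2))$, $((j,(d_1,d_2,d_3)),-1,(j+1,d_3))$. Configurations are (state, counter value) pairs with counter in $\mathbb{N}$; a transition with weight $-1$ is disabled at counter value 0; plays are maximal sequences of configurations following enabled transitions (a play with no enabled move ends). A configuration is winning for $\mathrm{Verifier}$ if he has a strategy ensuring every compatible play visits $s'_F$. *)

theory Defs
  imports Main
begin

text \<open>Tape alphabet Sigma = {0,1,#,a,r}.\<close>
datatype sym = S0 | S1 | Blank | Acc | Rej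

datatype dir = MLeft | MRight

text \<open>Delta = Sigma \<union> (Q \<times> Sigma).\<close>
datatype 'q cell = Sym sym | Head 'q sym

fun is_head :: "'q cell \<Rightarrow> bool" where
  "is_head (Sym _) = False"
| "is_head (Head _ _) = True"

fun sym_of :: "'q cell \<Rightarrow> sym" where
  "sym_of (Sym s) = s"
| "sym_of (Head _ s) = s"

fun state_of :: "'q cell \<Rightarrow> 'q" where
  "state_of (Head q _) = q"
| "state_of (Sym _) = undefined"

type_synonym 'q tm_delta = "'q \<Rightarrow> sym \<Rightarrow> 'q \<times> sym \<times> dir"

definition delta1 :: "'q tm_delta \<Rightarrow> 'q \<Rightarrow> sym \<Rightarrow> 'q" where
  "delta1 \<delta> q b = fst (\<delta> q b)"
definition delta2 :: "'q tm_delta \<Rightarrow> 'q \<Rightarrow> sym \<Rightarrow> sym" where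
  "delta2 \<delta> q b = fst (snd (\<delta> q b))"
definition delta3 :: "'q tm_delta \<Rightarrow> 'q \<Rightarrow> sym \<Rightarrow> dir" where
  "delta3 \<delta> q b = snd (snd (\<delta> q b))"

text \<open>A configuration: cell index j \<mapsto> C(j); only the indices 0..N+1 are meaningful
  (N = 2^2^n), the other indices hold blanks and are never touched.\<close>
type_synonym 'q config = "nat \<Rightarrow> 'q cell"

definition inp :: "sym list \<Rightarrow> nat \<Rightarrow> sym" where
  "inp w j = (if 1 \<le> j \<and> j \<le> length w then w ! (j - 1) else Blank)"

definition init_conf :: "'q \<Rightarrow> nat \<Rightarrow> sym list \<Rightarrow> 'q config" where
  "init_conf q0 N w j =
     (if j = 0 \<or> j = N + 1 then Sym Acc
      else if j = 1 then Head q0 (inp w 1)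
      else if j \<le> N then Sym (inp w j)
      else Sym Blank)"

definition head_pos :: "'q config \<Rightarrow> nat" where
  "head_pos C = (LEAST p. is_head (C p))"

definition tm_step :: "'q tm_delta \<Rightarrow> 'q config \<Rightarrow> 'q config" where
  "tm_step \<delta> C =
     (let p = head_pos C; q = state_of (C p); b = sym_of (C p);
          p' = (if delta3 \<delta> q b = MRight then p + 1 else p - 1)
      in C(p := Sym (delta2 \<delta> q b), p' := Head (delta1 \<delta> q b) (sym_of (C p'))))"

definition halted :: "'q config \<Rightarrow> bool" where
  "halted C = (sym_of (C (head_pos C)) \<in> {Acc, Rej})"

definition tm_run :: "'q tm_delta \<Rightarrow> 'q \<Rightarrow> nat \<Rightarrow> sym list \<Rightarrow> nat \<Rightarrow> 'q config" where
  "tm_run \<delta> q0 N w i = (tm_step \<delta> ^^ i) (init_conf q0 N w)"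

text \<open>C^w_i exists: the machine has not halted in any earlier configuration.\<close>
definition run_exists :: "'q tm_delta \<Rightarrow> 'q \<Rightarrow> nat \<Rightarrow> sym list \<Rightarrow> nat \<Rightarrow> bool" where
  "run_exists \<delta> q0 N w i = (\<forall>i' < i. \<not> halted (tm_run \<delta> q0 N w i'))"

definition Pre :: "'q tm_delta \<Rightarrow> 'q cell \<Rightarrow> ('q cell \<times> 'q cell \<times> 'q cell) set" where
  "Pre \<delta> d =
     {(Sym d1, Sym d2, Sym d3) | d1 d2 d3. d = Sym d2}
   \<union> {(Head q b, Sym d2, Sym d3) | q b d2 d3.
        (d = Head (delta1 \<delta> q b) d2 \<and> delta3 \<delta> q b = MRight)
      \<or> (d = Sym d2 \<and> delta3 \<delta> q b \<noteq> MRight)}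
   \<union> {(Sym d1, Sym d2, Head q b) | d1 d2 q b.
        (d = Head (delta1 \<delta> q b) d2 \<and> delta3 \<delta> q b = MLeft)
      \<or> (d = Sym d2 \<and> delta3 \<delta> q b \<noteq> MLeft)}
   \<union> {(Sym d1, Head q b, Sym d3) | d1 q b d3. d = Sym (delta2 \<delta> q b)}"

text \<open>A game arena on configurations 'c: move relation mv, and vpos x says
  the configuration x belongs to Verifier (others belong to Falsifier).\<close>

definition legal_strategy :: "('c \<Rightarrow> 'c \<Rightarrow> bool) \<Rightarrow> ('c \<Rightarrow> bool) \<Rightarrow> ('c list \<Rightarrow> 'c) \<Rightarrow> bool" where
  "legal_strategy mv vpos \<sigma> =
     (\<forall>h. h \<noteq> [] \<and> vpos (last h) \<and> (\<exists>y. mv (last h) y) \<longrightarrow> mv (last h) (\<sigma> h))"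

definition fin_play :: "('c \<Rightarrow> 'c \<Rightarrow> bool) \<Rightarrow> ('c \<Rightarrow> bool) \<Rightarrow> ('c list \<Rightarrow> 'c) \<Rightarrow> 'c \<Rightarrow> 'c list \<Rightarrow> bool" where
  "fin_play mv vpos \<sigma> x xs =
     (xs \<noteq> [] \<and> hd xs = x \<and>
      (\<forall>k. Suc k < length xs \<longrightarrow>
         mv (xs ! k) (xs ! Suc k) \<and> (vpos (xs ! k) \<longrightarrow> xs ! Suc k = \<sigma> (take (Suc k) xs))) \<and>
      \<not> (\<exists>y. mv (last xs) y))"

definition inf_play :: "('c \<Rightarrow> 'c \<Rightarrow> bool) \<Rightarrow> ('c \<Rightarrow> bool) \<Rightarrow> ('c list \<Rightarrow> 'c) \<Rightarrow> 'c \<Rightarrow> (nat \<Rightarrow> 'c) \<Rightarrow> bool" where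
  "inf_play mv vpos \<sigma> x f =
     (f 0 = x \<and>
      (\<forall>k. mv (f k) (f (Suc k)) \<and> (vpos (f k) \<longrightarrow> f (Suc k) = \<sigma> (map f [0..<Suc k]))))"

definition reach_wins :: "('c \<Rightarrow> 'c \<Rightarrow> bool) \<Rightarrow> ('c \<Rightarrow> bool) \<Rightarrow> ('c \<Rightarrow> bool) \<Rightarrow> 'c \<Rightarrow> bool" where
  "reach_wins mv vpos goal x =
     (\<exists>\<sigma>. legal_strategy mv vpos \<sigma> \<and>
        (\<forall>xs. fin_play mv vpos \<sigma> x xs \<longrightarrow> (\<exists>y \<in> set xs. goal y)) \<and>
        (\<forall>f. inf_play mv vpos \<sigma> x f \<longrightarrow> (\<exists>k. goal (f k))))"

datatype 'q gstate = Gs0 | Gsz | Gsr | GsF | Cell nat "'q cell" | Tri nat "'q cell" "'q cell" "'q cell"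

fun verifier_state :: "'q gstate \<Rightarrow> bool" where
  "verifier_state Gs0 = True"
| "verifier_state (Cell _ _) = True"
| "verifier_state _ = False"

definition ocg_trans :: "'q tm_delta \<Rightarrow> 'q \<Rightarrow> 'q \<Rightarrow> nat \<Rightarrow> sym list \<Rightarrow> ('q gstate \<times> int \<times> 'q gstate) set" where
  "ocg_trans \<delta> q0 qF N w =
     {(Gs0, 1, Gs0), (Gs0, 0, Cell 1 (Head qF Acc))}
   \<union> {(Cell j d, 0, Tri j d1 d2 d3) | j d d1 d2 d3. 1 \<le> j \<and> j \<le> N \<and> (d1, d2, d3) \<in> Pre \<delta> d}
   \<union> {(Cell j (Sym Acc), 0, GsF) | j. j = 0 \<or> j = N + 1}
   \<union> {(Cell j d, 0, Gsr) | j d. (j = 0 \<or> j = N + 1) \<and> d \<noteq> Sym Acc}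
   \<union> {(Cell j d, 0, Gsz) | j d. j \<le> N + 1 \<and> init_conf q0 N w j = d}
   \<union> {(Gsz, 0, GsF), (Gsz, -1, Gsr)}
   \<union> {(Tri j d1 d2 d3, -1, Cell (j - 1) d1) | j d1 d2 d3. 1 \<le> j \<and> j \<le> N}
   \<union> {(Tri j d1 d2 d3, -1, Cell j d2) | j d1 d2 d3. 1 \<le> j \<and> j \<le> N}
   \<union> {(Tri j d1 d2 d3, -1, Cell (j + 1) d3) | j d1 d2 d3. 1 \<le> j \<and> j \<le> N}"

text \<open>Moves between configurations (state, counter value); the counter stays in nat,
  so a -1 transition is disabled at counter value 0.\<close>
definition ocg_move :: "'q tm_delta \<Rightarrow> 'q \<Rightarrow> 'q \<Rightarrow> nat \<Rightarrow> sym list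
     \<Rightarrow> 'q gstate \<times> nat \<Rightarrow> 'q gstate \<times> nat \<Rightarrow> bool" where
  "ocg_move \<delta> q0 qF N w x y =
     (\<exists>wt. (fst x, wt, fst y) \<in> ocg_trans \<delta> q0 qF N w \<and> int (snd y) = int (snd x) + wt)"

definition ocg_wins :: "'q tm_delta \<Rightarrow> 'q \<Rightarrow> 'q \<Rightarrow> nat \<Rightarrow> sym list \<Rightarrow> 'q gstate \<times> nat \<Rightarrow> bool" where
  "ocg_wins \<delta> q0 qF N w x =
     reach_wins (ocg_move \<delta> q0 qF N w) (\<lambda>c. verifier_state (fst c)) (\<lambda>c. fst c = GsF) x"

end

theory Submission
  imports Defs
begin

(* The one-counter game simulates the run of the Turing machine backwards.
   At a Verifier position (Cell j d, i) Verifier claims that cell j of the i-th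
   configuration holds d: with counter 0 he can only justify this by the initial
   configuration (state s'_z), with counter i+1 he has to present a window
   (d1,d2,d3) in Pre(d), and Falsifier then challenges one of its three cells
   at counter i.  The proof has three parts.
   (1) For general reachability games we prove the one-step characterisation of
       the winning region: a Verifier position is winning iff some successor is,
       a Falsifier position iff it has a successor and all successors are.  The
       difficult direction composes strategies of the successors into one.
   (2) Instantiated to the game G this yields a recursion for the winning
       configurations (Cell j d, c) in terms of those at counter c - 1.
   (3) For the machine, every existing configuration has both end markers and a
       unique head, and in such a configuration Pre(d) contains the window around
       cell j exactly when the next configuration holds d at cell j. *)


definition wins_with :: "('c \<Rightarrow> 'c \<Rightarrow> bool) \<Rightarrow> ('c \<Rightarrow> bool) \<Rightarrow> ('c \<Rightarrow> bool) \<Rightarrow> ('c list \<Rightarrow> 'c) \<Rightarrow> 'c \<Rightarrow> bool" where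
  "wins_with mv vpos goal \<sigma> x \<longleftrightarrow>
     legal_strategy mv vpos \<sigma> \<and>
     (\<forall>xs. fin_play mv vpos \<sigma> x xs \<longrightarrow> (\<exists>y \<in> set xs. goal y)) \<and>
     (\<forall>f. inf_play mv vpos \<sigma> x f \<longrightarrow> (\<exists>k. goal (f k)))"

lemma reach_wins_iff: "reach_wins mv vpos goal x \<longleftrightarrow> (\<exists>\<sigma>. wins_with mv vpos goal \<sigma> x)"
  unfolding reach_wins_def wins_with_def ..

lemma wins_withD:
  assumes "wins_with mv vpos goal \<sigma> x"
  shows "legal_strategy mv vpos \<sigma>"
    and "fin_play mv vpos \<sigma> x xs \<Longrightarrow> \<exists>y \<in> set xs. goal y"
    and "inf_play mv vpos \<sigma> x f \<Longrightarrow> \<exists>k. goal (f k)"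
  using assms unfolding wins_with_def by blast+

lemma legal_strategyD:
  "legal_strategy mv vpos \<sigma> \<Longrightarrow> h \<noteq> [] \<Longrightarrow> vpos (last h) \<Longrightarrow> mv (last h) z \<Longrightarrow> mv (last h) (\<sigma> h)"
  unfolding legal_strategy_def by blast

lemma fin_playD:
  assumes "fin_play mv vpos \<sigma> x xs"
  shows "xs \<noteq> []" and "hd xs = x" and "\<not> mv (last xs) z"
  using assms unfolding fin_play_def by blast+

definition any_move :: "('c \<Rightarrow> 'c \<Rightarrow> bool) \<Rightarrow> 'c list \<Rightarrow> 'c" where
  "any_move mv h = (SOME y. mv (last h) y)"

lemma legal_any_move: "legal_strategy mv vpos (any_move mv)"
  unfolding legal_strategy_def any_move_def by (auto intro: someI)

text \<open>The residual of \<sigma> after the first position x: plays from a successor of x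
  are plays from x with their first position removed.\<close>

definition shift :: "'c \<Rightarrow> ('c list \<Rightarrow> 'c) \<Rightarrow> 'c list \<Rightarrow> 'c" where
  "shift x \<sigma> h = \<sigma> (x # h)"

lemma legal_shift: "legal_strategy mv vpos \<sigma> \<Longrightarrow> legal_strategy mv vpos (shift x \<sigma>)"
  unfolding legal_strategy_def shift_def by (metis last_ConsR list.distinct(1))

lemma fin_play_Cons:
  "fin_play mv vpos \<sigma> x (x # y # ys) \<longleftrightarrow>
     mv x y \<and> (vpos x \<longrightarrow> y = \<sigma> [x]) \<and> fin_play mv vpos (shift x \<sigma>) y (y # ys)"
  (is "?L \<longleftrightarrow> ?R")
proof
  assume ?L
  then have steps: "mv (xs ! k) (xs ! Suc k) \<and> (vpos (xs ! k) \<longrightarrow> xs ! Suc k = \<sigma> (take (Suc k) xs))"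
    if "Suc k < length xs" "xs = x # y # ys" for k xs
    using that unfolding fin_play_def by blast
  have "mv ((y # ys) ! k) ((y # ys) ! Suc k) \<and>
        (vpos ((y # ys) ! k) \<longrightarrow> (y # ys) ! Suc k = shift x \<sigma> (take (Suc k) (y # ys)))"
    if "Suc k < length (y # ys)" for k
    using steps[of "Suc k"] that by (simp add: shift_def)
  with \<open>?L\<close> steps[of 0] show ?R unfolding fin_play_def by auto
next
  assume ?R
  then show ?L unfolding fin_play_def
    by (auto simp: shift_def less_Suc_eq_0_disj)
qed

lemma inf_play_Cons:
  "inf_play mv vpos \<sigma> x f \<longleftrightarrow>
     f 0 = x \<and> mv x (f 1) \<and> (vpos x \<longrightarrow> f 1 = \<sigma> [x]) \<and>
     inf_play mv vpos (shift x \<sigma>) (f 1) (\<lambda>k. f (Suc k))"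
proof -
  have hist: "map f [0..<Suc (Suc k)] = f 0 # map (\<lambda>i. f (Suc i)) [0..<Suc k]" for k
    by (rule map_upt_Suc)
  have hist0: "map f [0..<Suc 0] = [f 0]" by simp
  define step where "step k \<longleftrightarrow> mv (f k) (f (Suc k)) \<and>
      (vpos (f k) \<longrightarrow> f (Suc k) = \<sigma> (map f [0..<Suc k]))" for k
  have "inf_play mv vpos \<sigma> x f \<longleftrightarrow> f 0 = x \<and> (\<forall>k. step k)"
    unfolding inf_play_def step_def ..
  also have "(\<forall>k. step k) \<longleftrightarrow> step 0 \<and> (\<forall>k. step (Suc k))"
    by (metis not0_implies_Suc)
  finally show ?thesis
    unfolding inf_play_def shift_def step_def hist hist0 by (auto simp del: upt_Suc)
qed

lemma fin_play_cong:
  assumes "\<And>ys. \<sigma> (x # ys) = \<sigma>' (x # ys)"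
  shows "fin_play mv vpos \<sigma> x xs \<longleftrightarrow> fin_play mv vpos \<sigma>' x xs"
proof -
  have "xs \<noteq> [] \<and> hd xs = x \<Longrightarrow> \<sigma> (take (Suc k) xs) = \<sigma>' (take (Suc k) xs)" for k
    using assms by (cases xs) simp_all
  then show ?thesis unfolding fin_play_def by auto
qed

lemma inf_play_cong:
  assumes "\<And>ys. \<sigma> (x # ys) = \<sigma>' (x # ys)"
  shows "inf_play mv vpos \<sigma> x f \<longleftrightarrow> inf_play mv vpos \<sigma>' x f"
proof -
  have "f 0 = x \<Longrightarrow> \<sigma> (map f [0..<Suc k]) = \<sigma>' (map f [0..<Suc k])" for k
    using assms by (simp only: map_upt_Suc)
  then show ?thesis unfolding inf_play_def by auto
qed

lemma wins_with_goal: "goal x \<Longrightarrow> wins_with mv vpos goal (any_move mv) x"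
  unfolding wins_with_def fin_play_def inf_play_def using legal_any_move hd_in_set by metis

text \<open>A non-goal position without moves is a maximal play of length one, hence losing.\<close>

lemma stuck_loses:
  assumes "\<not> goal x" and "\<not> (\<exists>y. mv x y)"
  shows "\<not> reach_wins mv vpos goal x"
proof
  assume "reach_wins mv vpos goal x"
  then obtain \<sigma> where "wins_with mv vpos goal \<sigma> x" unfolding reach_wins_iff ..
  moreover have "fin_play mv vpos \<sigma> x [x]" using assms unfolding fin_play_def by auto
  ultimately show False using assms wins_withD(2) by fastforce
qed

lemma reach_wins_has_move:
  assumes "reach_wins mv vpos goal x" and "\<not> goal x"
  obtains y where "mv x y"
  using assms stuck_loses by metis

lemma wins_with_shift:
  assumes win: "wins_with mv vpos goal \<sigma> x" and nogoal: "\<not> goal x"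
    and move: "mv x y" and choice: "vpos x \<longrightarrow> y = \<sigma> [x]"
  shows "wins_with mv vpos goal (shift x \<sigma>) y"
  unfolding wins_with_def
proof (intro conjI allI impI)
  show "legal_strategy mv vpos (shift x \<sigma>)"
    using wins_withD(1)[OF win] by (rule legal_shift)
next
  fix xs assume play: "fin_play mv vpos (shift x \<sigma>) y xs"
  obtain ys where xs: "xs = y # ys"
    using fin_playD(1,2)[OF play] by (cases xs) auto
  with play move choice have "fin_play mv vpos \<sigma> x (x # xs)"
    using fin_play_Cons[of mv vpos \<sigma> x y ys] by simp
  then have "\<exists>z\<in>set (x # xs). goal z" by (rule wins_withD(2)[OF win])
  with nogoal show "\<exists>z\<in>set xs. goal z" by simp
next
  fix g assume play: "inf_play mv vpos (shift x \<sigma>) y g"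
  define f where "f k = (case k of 0 \<Rightarrow> x | Suc k' \<Rightarrow> g k')" for k
  have "g 0 = y" using play unfolding inf_play_def by simp
  then have "f 0 = x" "f 1 = y" "(\<lambda>k. f (Suc k)) = g" by (simp_all add: f_def)
  with play move choice have "inf_play mv vpos \<sigma> x f"
    using inf_play_Cons[of mv vpos \<sigma> x f] by simp
  then obtain k where "goal (f k)" by (rule wins_withD(3)[OF win, elim_format]) blast
  with nogoal show "\<exists>k. goal (g k)" by (cases k) (auto simp: f_def)
qed

definition continue_with ::
  "('c \<Rightarrow> 'c \<Rightarrow> bool) \<Rightarrow> ('c \<Rightarrow> bool) \<Rightarrow> 'c \<Rightarrow> 'c \<Rightarrow> ('c \<Rightarrow> 'c list \<Rightarrow> 'c) \<Rightarrow> 'c list \<Rightarrow> 'c" where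
  "continue_with mv vpos x yz \<sigma>s h =
     (case h of _ # y # ys \<Rightarrow> \<sigma>s y (y # ys)
      | _ \<Rightarrow> if h = [x] \<and> vpos x then yz else any_move mv h)"

lemma shift_continue_with: "shift x (continue_with mv vpos x yz \<sigma>s) (y # ys) = \<sigma>s y (y # ys)"
  unfolding shift_def continue_with_def by simp

lemma legal_continue_with:
  assumes choice: "vpos x \<Longrightarrow> mv x yz" and legal: "\<And>y. legal_strategy mv vpos (\<sigma>s y)"
  shows "legal_strategy mv vpos (continue_with mv vpos x yz \<sigma>s)"
  unfolding legal_strategy_def
proof (intro allI impI)
  fix h assume h: "h \<noteq> [] \<and> vpos (last h) \<and> (\<exists>y. mv (last h) y)"
  then consider x' where "h = [x']" | x' y ys where "h = x' # y # ys"
    by (metis list.exhaust)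
  then show "mv (last h) (continue_with mv vpos x yz \<sigma>s h)"
  proof cases
    case 1
    have "mv x' (any_move mv [x'])" using h 1 unfolding any_move_def by (auto intro: someI)
    with 1 choice h show ?thesis unfolding continue_with_def by auto
  next
    case 2
    then show ?thesis
      using h legal_strategyD[OF legal[of y], of "y # ys"] unfolding continue_with_def by auto
  qed
qed

lemma wins_with_continue_with:
  assumes moves: "\<exists>y. mv x y" and choice: "vpos x \<Longrightarrow> mv x yz"
    and legal: "\<And>y. legal_strategy mv vpos (\<sigma>s y)"
    and succ: "\<And>y. mv x y \<Longrightarrow> (vpos x \<longrightarrow> y = yz) \<Longrightarrow> wins_with mv vpos goal (\<sigma>s y) y"
  shows "wins_with mv vpos goal (continue_with mv vpos x yz \<sigma>s) x"
proof -
  let ?\<sigma> = "continue_with mv vpos x yz \<sigma>s"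
  have first: "?\<sigma> [x] = (if vpos x then yz else any_move mv [x])"
    unfolding continue_with_def by simp
  have fin_rest: "fin_play mv vpos (shift x ?\<sigma>) y zs \<longleftrightarrow> fin_play mv vpos (\<sigma>s y) y zs" for y zs
    by (rule fin_play_cong) (rule shift_continue_with)
  have inf_rest: "inf_play mv vpos (shift x ?\<sigma>) y f \<longleftrightarrow> inf_play mv vpos (\<sigma>s y) y f" for y f
    by (rule inf_play_cong) (rule shift_continue_with)
  have fin: "\<exists>z\<in>set xs. goal z" if play: "fin_play mv vpos ?\<sigma> x xs" for xs
  proof -
    obtain xs' where xs': "xs = x # xs'"
      using fin_playD(1,2)[OF play] by (cases xs) auto
    have "xs' \<noteq> []"
      using fin_playD(3)[OF play] moves by (auto simp: xs')
    then obtain y ys where xs: "xs = x # y # ys"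
      using xs' by (cases xs') auto
    with play have move: "mv x y" and choose: "vpos x \<longrightarrow> y = yz"
        and rest: "fin_play mv vpos (\<sigma>s y) y (y # ys)"
      using fin_play_Cons[of mv vpos ?\<sigma> x y ys] fin_rest first
      by simp_all
    have "\<exists>z\<in>set (y # ys). goal z"
      using wins_withD(2)[OF succ[OF move choose] rest] .
    then show ?thesis unfolding xs by simp
  qed
  have inf: "\<exists>k. goal (f k)" if play: "inf_play mv vpos ?\<sigma> x f" for f
  proof -
    from play have move: "mv x (f 1)" and choose: "vpos x \<longrightarrow> f 1 = yz"
        and rest: "inf_play mv vpos (\<sigma>s (f 1)) (f 1) (\<lambda>k. f (Suc k))"
      using inf_play_Cons[of mv vpos ?\<sigma> x f] inf_rest first
      by simp_all
    obtain k where "goal (f (Suc k))"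
      using wins_withD(3)[OF succ[OF move choose] rest] ..
    then show ?thesis ..
  qed
  have "legal_strategy mv vpos ?\<sigma>"
    using choice legal by (rule legal_continue_with)
  with fin inf show ?thesis unfolding wins_with_def by blast
qed

lemma reach_wins_step:
  assumes moves: "\<exists>y. mv x y" and choice: "vpos x \<Longrightarrow> mv x yz"
    and succ: "\<And>y. mv x y \<Longrightarrow> (vpos x \<longrightarrow> y = yz) \<Longrightarrow> reach_wins mv vpos goal y"
  shows "reach_wins mv vpos goal x"
proof -
  define \<sigma>s where "\<sigma>s y = (if reach_wins mv vpos goal y
      then SOME \<sigma>. wins_with mv vpos goal \<sigma> y else any_move mv)" for y
  have \<sigma>s_wins: "wins_with mv vpos goal (\<sigma>s y) y" if "reach_wins mv vpos goal y" for y
    using that someI_ex[of "\<lambda>\<sigma>. wins_with mv vpos goal \<sigma> y"]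
    unfolding \<sigma>s_def reach_wins_iff by simp
  have \<sigma>s_legal: "legal_strategy mv vpos (\<sigma>s y)" for y
    using \<sigma>s_wins[of y] wins_withD(1) legal_any_move unfolding \<sigma>s_def by auto
  have "wins_with mv vpos goal (continue_with mv vpos x yz \<sigma>s) x"
    using moves choice \<sigma>s_legal \<sigma>s_wins[OF succ] by (rule wins_with_continue_with)
  then show ?thesis by (rule reach_wins_iff[THEN iffD2, OF exI])
qed

lemma reach_wins_verifier:
  assumes vpos: "vpos x" and nogoal: "\<not> goal x"
  shows "reach_wins mv vpos goal x \<longleftrightarrow> (\<exists>y. mv x y \<and> reach_wins mv vpos goal y)"
proof
  assume wins: "reach_wins mv vpos goal x"
  then obtain \<sigma> where win: "wins_with mv vpos goal \<sigma> x" unfolding reach_wins_iff ..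
  obtain y where "mv x y" using wins nogoal by (rule reach_wins_has_move)
  then have move: "mv x (\<sigma> [x])"
    using legal_strategyD[OF wins_withD(1)[OF win], of "[x]"] vpos by simp
  have "wins_with mv vpos goal (shift x \<sigma>) (\<sigma> [x])"
    using win nogoal move by (rule wins_with_shift) simp
  then have "reach_wins mv vpos goal (\<sigma> [x])" by (rule reach_wins_iff[THEN iffD2, OF exI])
  with move show "\<exists>y. mv x y \<and> reach_wins mv vpos goal y" by blast
next
  assume "\<exists>y. mv x y \<and> reach_wins mv vpos goal y"
  then obtain y where move: "mv x y" and wins: "reach_wins mv vpos goal y" by blast
  show "reach_wins mv vpos goal x"
  proof (rule reach_wins_step[where yz = y])
    show "\<exists>y. mv x y" using move ..
    show "mv x y" by (rule move)
    show "reach_wins mv vpos goal y'" if "vpos x \<longrightarrow> y' = y" for y'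
      using that vpos wins by simp
  qed
qed

lemma reach_wins_falsifier:
  assumes fpos: "\<not> vpos x" and nogoal: "\<not> goal x"
  shows "reach_wins mv vpos goal x \<longleftrightarrow>
    (\<exists>y. mv x y) \<and> (\<forall>y. mv x y \<longrightarrow> reach_wins mv vpos goal y)"
proof
  assume wins: "reach_wins mv vpos goal x"
  then obtain \<sigma> where win: "wins_with mv vpos goal \<sigma> x" unfolding reach_wins_iff ..
  obtain y where "mv x y" using wins nogoal by (rule reach_wins_has_move)
  moreover have "reach_wins mv vpos goal y" if "mv x y" for y
  proof -
    have "wins_with mv vpos goal (shift x \<sigma>) y"
      using win nogoal that by (rule wins_with_shift) (simp add: fpos)
    then show ?thesis by (rule reach_wins_iff[THEN iffD2, OF exI])
  qed
  ultimately show "(\<exists>y. mv x y) \<and> (\<forall>y. mv x y \<longrightarrow> reach_wins mv vpos goal y)" by blast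
next
  assume "(\<exists>y. mv x y) \<and> (\<forall>y. mv x y \<longrightarrow> reach_wins mv vpos goal y)"
  then have moves: "\<exists>y. mv x y" and succ: "\<And>y. mv x y \<Longrightarrow> reach_wins mv vpos goal y"
    by blast+
  show "reach_wins mv vpos goal x"
  proof (rule reach_wins_step[where yz = x])
    show "\<exists>y. mv x y" by (rule moves)
    show "mv x x" if "vpos x" using that fpos by contradiction
    show "reach_wins mv vpos goal y" if "mv x y" for y using that by (rule succ)
  qed
qed

lemma ocg_move_Gsr: "\<not> ocg_move \<delta> q0 qF N w (Gsr, c) y"
  unfolding ocg_move_def ocg_trans_def by auto

lemma ocg_move_Gsz:
  "ocg_move \<delta> q0 qF N w (Gsz, c) y \<longleftrightarrow> y = (GsF, c) \<or> (1 \<le> c \<and> y = (Gsr, c - 1))"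
  unfolding ocg_move_def ocg_trans_def by (cases y) auto

lemma ocg_move_Tri:
  assumes "1 \<le> j" and "j \<le> N"
  shows "ocg_move \<delta> q0 qF N w (Tri j d1 d2 d3, c) y \<longleftrightarrow> 1 \<le> c \<and>
    (y = (Cell (j - 1) d1, c - 1) \<or> y = (Cell j d2, c - 1) \<or> y = (Cell (j + 1) d3, c - 1))"
  using assms unfolding ocg_move_def ocg_trans_def
  by (cases y) (simp add: conj_disj_distribR ex_disj_distrib, auto)

lemma ocg_move_Cell_inner:
  assumes "1 \<le> j" and "j \<le> N"
  shows "ocg_move \<delta> q0 qF N w (Cell j d, c) y \<longleftrightarrow>
    (\<exists>d1 d2 d3. (d1, d2, d3) \<in> Pre \<delta> d \<and> y = (Tri j d1 d2 d3, c))
    \<or> (init_conf q0 N w j = d \<and> y = (Gsz, c))"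
  using assms unfolding ocg_move_def ocg_trans_def
  by (cases y) (simp add: conj_disj_distribR ex_disj_distrib, auto)

lemma ocg_move_Cell_border:
  assumes "j = 0 \<or> j = N + 1"
  shows "ocg_move \<delta> q0 qF N w (Cell j d, c) y \<longleftrightarrow>
    (d = Sym Acc \<and> y = (GsF, c)) \<or> (d \<noteq> Sym Acc \<and> y = (Gsr, c))
    \<or> (init_conf q0 N w j = d \<and> y = (Gsz, c))"
  using assms unfolding ocg_move_def ocg_trans_def
  by (cases y) (simp add: conj_disj_distribR ex_disj_distrib, auto)

lemma ocg_wins_verifier:
  assumes "verifier_state s"
  shows "ocg_wins \<delta> q0 qF N w (s, c) \<longleftrightarrow>
    (\<exists>y. ocg_move \<delta> q0 qF N w (s, c) y \<and> ocg_wins \<delta> q0 qF N w y)"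
proof -
  have "s \<noteq> GsF" using assms by auto
  with assms show ?thesis unfolding ocg_wins_def by (intro reach_wins_verifier) simp_all
qed

lemma ocg_wins_falsifier:
  assumes "\<not> verifier_state s" and "s \<noteq> GsF"
  shows "ocg_wins \<delta> q0 qF N w (s, c) \<longleftrightarrow>
    (\<exists>y. ocg_move \<delta> q0 qF N w (s, c) y) \<and>
    (\<forall>y. ocg_move \<delta> q0 qF N w (s, c) y \<longrightarrow> ocg_wins \<delta> q0 qF N w y)"
  using assms unfolding ocg_wins_def by (intro reach_wins_falsifier) simp_all

lemma ocg_wins_GsF: "ocg_wins \<delta> q0 qF N w (GsF, c)"
  unfolding ocg_wins_def reach_wins_iff by (rule exI, rule wins_with_goal) simp

lemma ocg_wins_Gsr: "\<not> ocg_wins \<delta> q0 qF N w (Gsr, c)"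
  unfolding ocg_wins_def by (rule stuck_loses) (simp_all add: ocg_move_Gsr)

lemma ocg_wins_Gsz: "ocg_wins \<delta> q0 qF N w (Gsz, c) \<longleftrightarrow> c = 0"
  using ocg_wins_GsF[of \<delta> q0 qF N w c] ocg_wins_Gsr[of \<delta> q0 qF N w "c - 1"]
  by (subst ocg_wins_falsifier) (auto simp: ocg_move_Gsz)

lemma ocg_wins_Tri:
  assumes "1 \<le> j" and "j \<le> N"
  shows "ocg_wins \<delta> q0 qF N w (Tri j d1 d2 d3, c) \<longleftrightarrow> 1 \<le> c \<and>
    ocg_wins \<delta> q0 qF N w (Cell (j - 1) d1, c - 1) \<and> ocg_wins \<delta> q0 qF N w (Cell j d2, c - 1) \<and>
    ocg_wins \<delta> q0 qF N w (Cell (j + 1) d3, c - 1)"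
  by (subst ocg_wins_falsifier) (auto simp: ocg_move_Tri[OF assms])

lemma ocg_wins_Cell_border:
  assumes "j = 0 \<or> j = N + 1"
  shows "ocg_wins \<delta> q0 qF N w (Cell j d, c) \<longleftrightarrow> d = Sym Acc"
proof -
  have "init_conf q0 N w j = Sym Acc" using assms unfolding init_conf_def by auto
  then show ?thesis
    using ocg_wins_GsF[of \<delta> q0 qF N w c] ocg_wins_Gsr[of \<delta> q0 qF N w c]
    by (subst ocg_wins_verifier) (auto simp: ocg_move_Cell_border[OF assms])
qed

lemma ocg_wins_Cell_inner:
  assumes "1 \<le> j" and "j \<le> N"
  shows "ocg_wins \<delta> q0 qF N w (Cell j d, c) \<longleftrightarrow>
    (\<exists>d1 d2 d3. (d1, d2, d3) \<in> Pre \<delta> d \<and> ocg_wins \<delta> q0 qF N w (Tri j d1 d2 d3, c))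
    \<or> (init_conf q0 N w j = d \<and> ocg_wins \<delta> q0 qF N w (Gsz, c))"
proof -
  have "ocg_wins \<delta> q0 qF N w (Cell j d, c) \<longleftrightarrow>
      (\<exists>y. ocg_move \<delta> q0 qF N w (Cell j d, c) y \<and> ocg_wins \<delta> q0 qF N w y)"
    by (rule ocg_wins_verifier) simp
  also have "\<dots> \<longleftrightarrow>
    (\<exists>d1 d2 d3. (d1, d2, d3) \<in> Pre \<delta> d \<and> ocg_wins \<delta> q0 qF N w (Tri j d1 d2 d3, c))
    \<or> (init_conf q0 N w j = d \<and> ocg_wins \<delta> q0 qF N w (Gsz, c))"
    unfolding ocg_move_Cell_inner[OF assms] by blast
  finally show ?thesis .
qed

lemma ocg_wins_Cell_0:
  assumes "1 \<le> j" and "j \<le> N"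
  shows "ocg_wins \<delta> q0 qF N w (Cell j d, 0) \<longleftrightarrow> init_conf q0 N w j = d"
  using ocg_wins_Cell_inner[OF assms, of \<delta> q0 qF w d 0]
  by (simp add: ocg_wins_Tri[OF assms] ocg_wins_Gsz)

lemma ocg_wins_Cell_Suc:
  assumes "1 \<le> j" and "j \<le> N"
  shows "ocg_wins \<delta> q0 qF N w (Cell j d, Suc c) \<longleftrightarrow>
    (\<exists>d1 d2 d3. (d1, d2, d3) \<in> Pre \<delta> d \<and> ocg_wins \<delta> q0 qF N w (Cell (j - 1) d1, c) \<and>
       ocg_wins \<delta> q0 qF N w (Cell j d2, c) \<and> ocg_wins \<delta> q0 qF N w (Cell (j + 1) d3, c))"
  using ocg_wins_Cell_inner[OF assms, of \<delta> q0 qF w d "Suc c"]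
  by (simp add: ocg_wins_Tri[OF assms] ocg_wins_Gsz)

definition single_head :: "'q config \<Rightarrow> nat \<Rightarrow> bool" where
  "single_head C p \<longleftrightarrow> is_head (C p) \<and> (\<forall>p'. is_head (C p') \<longrightarrow> p' = p)"

lemma single_head_Head:
  assumes "single_head C p"
  obtains q b where "C p = Head q b"
  using assms unfolding single_head_def by (cases "C p") auto

lemma single_head_Sym: "single_head C p \<Longrightarrow> x \<noteq> p \<Longrightarrow> \<exists>s. C x = Sym s"
  unfolding single_head_def by (metis is_head.elims(3))

lemma head_pos_single_head: "single_head C p \<Longrightarrow> head_pos C = p"
  unfolding single_head_def head_pos_def by (metis (mono_tags) Least_equality order_refl)

definition move_target :: "'q tm_delta \<Rightarrow> 'q \<Rightarrow> sym \<Rightarrow> nat \<Rightarrow> nat" where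
  "move_target \<delta> q b p = (if delta3 \<delta> q b = MRight then p + 1 else p - 1)"

lemma tm_step_single_head:
  assumes "single_head C p" and "C p = Head q b"
  shows "tm_step \<delta> C = C(p := Sym (delta2 \<delta> q b),
    move_target \<delta> q b p := Head (delta1 \<delta> q b) (sym_of (C (move_target \<delta> q b p))))"
  unfolding tm_step_def head_pos_single_head[OF assms(1)] assms(2) move_target_def Let_def by simp

lemma tm_step_moves_head:
  assumes head: "single_head C p" and Cp: "C p = Head q b" and "1 \<le> p"
  shows "single_head (tm_step \<delta> C) (move_target \<delta> q b p)"
    and "x \<noteq> p \<Longrightarrow> x \<noteq> move_target \<delta> q b p \<Longrightarrow> tm_step \<delta> C x = C x"
proof -
  have "move_target \<delta> q b p \<noteq> p" using \<open>1 \<le> p\<close> unfolding move_target_def by auto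
  then show "single_head (tm_step \<delta> C) (move_target \<delta> q b p)"
    using head unfolding tm_step_single_head[OF head Cp] single_head_def by auto
  show "x \<noteq> p \<Longrightarrow> x \<noteq> move_target \<delta> q b p \<Longrightarrow> tm_step \<delta> C x = C x"
    unfolding tm_step_single_head[OF head Cp] by simp
qed

text \<open>Pre(d) is the set of windows whose middle cell becomes d; in particular every
  window determines d.\<close>

lemma Pre_functional: "t \<in> Pre \<delta> d \<Longrightarrow> t \<in> Pre \<delta> d' \<Longrightarrow> d = d'"
  unfolding Pre_def by auto

lemma Pre_no_head: "(Sym s1, Sym s, Sym s3) \<in> Pre \<delta> (Sym s)"
  unfolding Pre_def by simp

lemma Pre_head_left:
  "(Head q b, Sym s, Sym s3) \<in> Pre \<delta>
     (if delta3 \<delta> q b = MRight then Head (delta1 \<delta> q b) s else Sym s)"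
  unfolding Pre_def by simp

lemma Pre_head_mid: "(Sym s1, Head q b, Sym s3) \<in> Pre \<delta> (Sym (delta2 \<delta> q b))"
  unfolding Pre_def by simp

lemma Pre_head_right:
  "(Sym s1, Sym s, Head q b) \<in> Pre \<delta>
     (if delta3 \<delta> q b = MLeft then Head (delta1 \<delta> q b) s else Sym s)"
  unfolding Pre_def by (cases "delta3 \<delta> q b") simp_all

text \<open>In a single-headed configuration the window around any cell j lies in Pre of
  the content of cell j after one step; the four cases are the head's position
  relative to the window.\<close>

lemma step_window:
  assumes head: "single_head C p" and "1 \<le> p" and "1 \<le> j"
  shows "(C (j - 1), C j, C (j + 1)) \<in> Pre \<delta> (tm_step \<delta> C j)"
proof -
  obtain q b where Cp: "C p = Head q b" using head by (rule single_head_Head)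
  have step: "tm_step \<delta> C j =
      (if j = move_target \<delta> q b p then Head (delta1 \<delta> q b) (sym_of (C j))
       else if j = p then Sym (delta2 \<delta> q b) else C j)"
    unfolding tm_step_single_head[OF head Cp] by simp
  note sym = single_head_Sym[OF head]
  consider "p = j - 1" "j \<ge> 2" | "p = j" | "p = j + 1" | "p \<noteq> j - 1" "p \<noteq> j" "p \<noteq> j + 1"
    using assms by linarith
  then show ?thesis
  proof cases
    case 1
    obtain s s3 where "C j = Sym s" "C (j + 1) = Sym s3" using sym 1 by fastforce
    moreover have "tm_step \<delta> C j =
        (if delta3 \<delta> q b = MRight then Head (delta1 \<delta> q b) s else Sym s)"
      using step 1 calculation by (auto simp: move_target_def)
    ultimately show ?thesis using 1 Cp Pre_head_left by (simp split del: if_split)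
  next
    case 2
    obtain s1 s3 where "C (j - 1) = Sym s1" "C (j + 1) = Sym s3" using sym 2 assms by fastforce
    moreover have "tm_step \<delta> C j = Sym (delta2 \<delta> q b)"
      using step 2 assms by (auto simp: move_target_def)
    ultimately show ?thesis using 2 Cp Pre_head_mid by simp
  next
    case 3
    obtain s1 s where "C (j - 1) = Sym s1" "C j = Sym s" using sym 3 assms by fastforce
    moreover have "tm_step \<delta> C j =
        (if delta3 \<delta> q b = MLeft then Head (delta1 \<delta> q b) s else Sym s)"
      using step 3 calculation by (cases "delta3 \<delta> q b") (auto simp: move_target_def)
    ultimately show ?thesis using 3 Cp Pre_head_right by (simp split del: if_split)
  next
    case 4
    obtain s1 s s3 where "C (j - 1) = Sym s1" "C j = Sym s" "C (j + 1) = Sym s3"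
      using sym 4 by metis
    moreover have "tm_step \<delta> C j = C j"
      using step 4 by (auto simp: move_target_def)
    ultimately show ?thesis using Pre_no_head by simp
  qed
qed

lemma Pre_iff_tm_step:
  assumes "single_head C p" and "1 \<le> p" and "1 \<le> j"
  shows "(C (j - 1), C j, C (j + 1)) \<in> Pre \<delta> d \<longleftrightarrow> tm_step \<delta> C j = d"
  using step_window[OF assms, of \<delta>] Pre_functional by metis

definition framed :: "nat \<Rightarrow> 'q config \<Rightarrow> bool" where
  "framed N C \<longleftrightarrow> C 0 = Sym Acc \<and> C (N + 1) = Sym Acc \<and> (\<exists>p. single_head C p)"

lemma framed_init_conf: "1 \<le> N \<Longrightarrow> framed N (init_conf q0 N w)"
  unfolding framed_def single_head_def init_conf_def by (intro conjI exI[of _ 1]) auto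

text \<open>Since the head never leaves the cells 1..N, every existing configuration is framed.\<close>

lemma framed_tm_run:
  assumes N: "1 \<le> N"
    and space: "\<forall>i p. run_exists \<delta> q0 N w i \<and> is_head (tm_run \<delta> q0 N w i p) \<longrightarrow> 1 \<le> p \<and> p \<le> N"
  shows "run_exists \<delta> q0 N w i \<Longrightarrow> framed N (tm_run \<delta> q0 N w i)"
proof (induction i)
  case 0
  then show ?case using framed_init_conf[OF N] by (simp add: tm_run_def)
next
  case (Suc i)
  let ?C = "tm_run \<delta> q0 N w i"
  have run: "run_exists \<delta> q0 N w i" using Suc.prems unfolding run_exists_def by simp
  then obtain p where head: "single_head ?C p" and border: "?C 0 = Sym Acc" "?C (N + 1) = Sym Acc"
    using Suc.IH unfolding framed_def by blast
  obtain q b where Cp: "?C p = Head q b" using head by (rule single_head_Head)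
  have "1 \<le> p" "p \<le> N" using space run head unfolding single_head_def by blast+
  let ?t = "move_target \<delta> q b p"
  have next_run: "tm_run \<delta> q0 N w (Suc i) = tm_step \<delta> ?C" by (simp add: tm_run_def)
  have head': "single_head (tm_step \<delta> ?C) ?t"
    using tm_step_moves_head(1)[OF head Cp \<open>1 \<le> p\<close>] .
  then have "is_head (tm_run \<delta> q0 N w (Suc i) ?t)"
    unfolding next_run single_head_def by blast
  then have "1 \<le> ?t" "?t \<le> N" using space Suc.prems by blast+
  then have "tm_step \<delta> ?C 0 = Sym Acc" "tm_step \<delta> ?C (N + 1) = Sym Acc"
    using tm_step_moves_head(2)[OF head Cp \<open>1 \<le> p\<close>] border \<open>1 \<le> p\<close> \<open>p \<le> N\<close> by auto
  with head' show ?case unfolding next_run framed_def by blast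
qed

lemma ocg_wins_iff_tm_run:
  assumes N: "1 \<le> N"
    and space: "\<forall>i p. run_exists \<delta> q0 N w i \<and> is_head (tm_run \<delta> q0 N w i p) \<longrightarrow> 1 \<le> p \<and> p \<le> N"
  shows "run_exists \<delta> q0 N w i \<Longrightarrow> 1 \<le> j \<Longrightarrow> j \<le> N \<Longrightarrow>
    ocg_wins \<delta> q0 qF N w (Cell j d, i) \<longleftrightarrow> tm_run \<delta> q0 N w i j = d"
proof (induction i arbitrary: j d)
  case 0
  then show ?case using ocg_wins_Cell_0 by (simp add: tm_run_def)
next
  case (Suc i)
  let ?C = "tm_run \<delta> q0 N w i"
  let ?W = "ocg_wins \<delta> q0 qF N w"
  have run: "run_exists \<delta> q0 N w i" using Suc.prems(1) unfolding run_exists_def by simp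
  then have framed: "framed N ?C" by (rule framed_tm_run[OF N space])
  then obtain p where head: "single_head ?C p" unfolding framed_def by blast
  then have "1 \<le> p" using space run unfolding single_head_def by blast
  have cell: "?W (Cell k e, i) \<longleftrightarrow> ?C k = e" if "k \<le> N + 1" for k e
  proof (cases "k = 0 \<or> k = N + 1")
    case True
    then have "?C k = Sym Acc" using framed unfolding framed_def by auto
    with True show ?thesis by (auto simp: ocg_wins_Cell_border)
  next
    case False
    then show ?thesis using Suc.IH[OF run] that by simp
  qed
  have "?W (Cell j d, Suc i) \<longleftrightarrow> (\<exists>d1 d2 d3. (d1, d2, d3) \<in> Pre \<delta> d \<and>
      ?W (Cell (j - 1) d1, i) \<and> ?W (Cell j d2, i) \<and> ?W (Cell (j + 1) d3, i))"
    using Suc.prems by (intro ocg_wins_Cell_Suc)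
  also have "\<dots> \<longleftrightarrow> (?C (j - 1), ?C j, ?C (j + 1)) \<in> Pre \<delta> d"
    using cell[of "j - 1"] cell[of j] cell[of "j + 1"] Suc.prems by auto
  also have "\<dots> \<longleftrightarrow> tm_step \<delta> ?C j = d"
    by (rule Pre_iff_tm_step[OF head \<open>1 \<le> p\<close> Suc.prems(2)])
  finally show ?case by (simp add: tm_run_def)
qed

theorem mainTheorem6:
  fixes \<delta> :: "'q::finite tm_delta" and q0 qF :: 'q and w :: "sym list" and k N :: nat
  defines "N \<equiv> 2 ^ (2 ^ (length w ^ k))"
  assumes input: "set w \<subseteq> {S0, S1}"
    and space: "\<forall>i p. run_exists \<delta> q0 N w i \<and> is_head (tm_run \<delta> q0 N w i p) \<longrightarrow> 1 \<le> p \<and> p \<le> N"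
    and accept: "\<forall>i p q. run_exists \<delta> q0 N w i \<and> tm_run \<delta> q0 N w i p = Head q Acc
                   \<longrightarrow> q = qF \<and> p = 1"
  shows "(\<forall>j d i. 1 \<le> j \<and> j \<le> N \<and> run_exists \<delta> q0 N w i \<longrightarrow>
            (ocg_wins \<delta> q0 qF N w (Cell j d, i) \<longleftrightarrow> tm_run \<delta> q0 N w i j = d))
       \<and> (\<forall>i. run_exists \<delta> q0 N w i \<longrightarrow>
            (ocg_wins \<delta> q0 qF N w (Cell 1 (Head qF Acc), i) \<longleftrightarrow> tm_run \<delta> q0 N w i 1 = Head qF Acc))"
proof -
  have N: "1 \<le> N" unfolding N_def by simp
  show ?thesis using ocg_wins_iff_tm_run[OF N space] N by blast
qed

end
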